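(* Let $G=\{g_t\}_{t\in\mathbb R}$ be a one-parameter continuous subgroup of the affine group $\mathcal G$, and let $G\ni g_t\mapsto U_t$ be a strongly continuous unitary representation of $G$ in a Hilbert space $\mathcal H$. Assume that $A$ is a maximal dissipative operator in $\mathcal H$ which is $G$-invariant with respect to this representation. Then the strongly continuous unitary group $U_t$ and the strongly continuous semigroup of contractions $V_s=e^{iAs}$, $s\ge 0$, generated by $A$ satisfy the restricted generalized Weyl commutation relations $$U_tV_s=e^{isg_t(0)}V_{g_t'(0)s}U_t,\qquad t\in\mathbb R,\ s\ge 0,$$ where $g_t'(0)=\frac{d}{dx}g_t(x)\big|_{x=0}$. Conversely, if a strongly continuous unitary group $U_t$ (with $g_t\mapsto U_t$ a representation of $G$) and a strongly continuous semigroup of contractions $V_s=e^{iAs}$, $s\ge0$, satisfy these relations, then the generator $A$ of the semigroup $V_s$ is $G$-invariant with respect to the group $G=\{g_t\}_{t\in\mathbb R}$ and its unitary representation $g_t\mapsto U_t$.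
   Context: $\mathcal G$ denotes the group (under composition) of affine maps $g(x)=ax+b$ of $\mathbb R$ with $a>0$, $b\in\mathbb R$. For an operator $A$ and $g(x)=ax+b$, $g(A)$ denotes $aA+bI$. Given a subgroup $G\subset\mathcal G$ and a unitary representation $G\ni g\mapsto U_g$ ($U_fU_g=U_{fg}$) on a separable Hilbert space, a densely defined closed operator $A$ is called $G$-invariant (with respect to this representation) if for all $g\in G$ one has $U_g(\mathrm{Dom}(A))=\mathrm{Dom}(A)$ and $U_gAU_g^*f=aAf+bf$ for all $f\in\mathrm{Dom}(A)$, where $g(x)=ax+b$. An operator $A$ is dissipative if $\operatorname{Im}(Af,f)\ge0$ for $f\in\mathrm{Dom}(A)$, and maximal dissipative if it has no proper dissipative extension. *)

theory Defs
  imports "HOL-Analysis.Analysis"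
begin

text \<open>A complex Hilbert space is encoded as a real Hilbert space (type class
real_inner + complete_space) together with an orthogonal complex structure J
(multiplication by the imaginary unit).\<close>

definition cplx_structure :: "('h::real_inner \<Rightarrow> 'h) \<Rightarrow> bool" where
  "cplx_structure J \<longleftrightarrow> linear J \<and> (\<forall>x. J (J x) = - x) \<and> (\<forall>x y. inner (J x) (J y) = inner x y)"

definition smC :: "('h::real_inner \<Rightarrow> 'h) \<Rightarrow> complex \<Rightarrow> 'h \<Rightarrow> 'h" where
  "smC J c x = Re c *\<^sub>R x + Im c *\<^sub>R J x"

text \<open>complex inner product, linear in the first, antilinear in the second argument\<close>
definition cinner :: "('h::real_inner \<Rightarrow> 'h) \<Rightarrow> 'h \<Rightarrow> 'h \<Rightarrow> complex" where
  "cinner J x y = Complex (inner x y) (inner x (J y))"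

definition separable_space :: "'h::real_inner itself \<Rightarrow> bool" where
  "separable_space _ \<longleftrightarrow> (\<exists>S::'h set. countable S \<and> closure S = UNIV)"

text \<open>A (complex-)linear operator with domain D (values of A outside D are irrelevant).\<close>
definition lin_op :: "('h::real_inner \<Rightarrow> 'h) \<Rightarrow> 'h set \<Rightarrow> ('h \<Rightarrow> 'h) \<Rightarrow> bool" where
  "lin_op J D A \<longleftrightarrow> 0 \<in> D \<and> (\<forall>x\<in>D. \<forall>y\<in>D. x + y \<in> D) \<and> (\<forall>x\<in>D. \<forall>c. smC J c x \<in> D)
     \<and> (\<forall>x\<in>D. \<forall>y\<in>D. A (x + y) = A x + A y) \<and> (\<forall>x\<in>D. \<forall>c. A (smC J c x) = smC J c (A x))"

definition densely_defined :: "'h::real_inner set \<Rightarrow> bool" where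
  "densely_defined D \<longleftrightarrow> closure D = UNIV"

definition closed_op :: "'h::real_inner set \<Rightarrow> ('h \<Rightarrow> 'h) \<Rightarrow> bool" where
  "closed_op D A \<longleftrightarrow> closed {(x, A x) | x. x \<in> D}"

definition dissipative :: "('h::real_inner \<Rightarrow> 'h) \<Rightarrow> 'h set \<Rightarrow> ('h \<Rightarrow> 'h) \<Rightarrow> bool" where
  "dissipative J D A \<longleftrightarrow> (\<forall>f\<in>D. Im (cinner J (A f) f) \<ge> 0)"

definition max_dissipative :: "('h::real_inner \<Rightarrow> 'h) \<Rightarrow> 'h set \<Rightarrow> ('h \<Rightarrow> 'h) \<Rightarrow> bool" where
  "max_dissipative J D A \<longleftrightarrow> lin_op J D A \<and> dissipative J D A \<and>
     (\<forall>D' A'. lin_op J D' A' \<and> dissipative J D' A' \<and> D \<subseteq> D' \<and> (\<forall>x\<in>D. A' x = A x) \<longrightarrow> D' = D)"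

definition unitary :: "('h::real_inner \<Rightarrow> 'h) \<Rightarrow> ('h \<Rightarrow> 'h) \<Rightarrow> bool" where
  "unitary J U \<longleftrightarrow> (\<forall>x y. U (x + y) = U x + U y) \<and> (\<forall>c x. U (smC J c x) = smC J c (U x))
     \<and> surj U \<and> (\<forall>x y. cinner J (U x) (U y) = cinner J x y)"

text \<open>An affine map x \<mapsto> a x + b (a > 0) is represented by the pair (a, b).\<close>
definition aff :: "real \<times> real \<Rightarrow> real \<Rightarrow> real" where
  "aff p x = fst p * x + snd p"

definition one_param_affine :: "(real \<Rightarrow> real \<times> real) \<Rightarrow> bool" where
  "one_param_affine g \<longleftrightarrow> (\<forall>t. fst (g t) > 0) \<and> (\<forall>t s. aff (g (t + s)) = aff (g t) \<circ> aff (g s))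
     \<and> continuous_on UNIV g"

text \<open>U t is the operator assigned to g t; well-definedness on G is required.\<close>
definition sc_unitary_rep :: "('h::real_inner \<Rightarrow> 'h) \<Rightarrow> (real \<Rightarrow> real \<times> real) \<Rightarrow> (real \<Rightarrow> 'h \<Rightarrow> 'h) \<Rightarrow> bool" where
  "sc_unitary_rep J g U \<longleftrightarrow> (\<forall>t. unitary J (U t)) \<and> (\<forall>t s. U (t + s) = U t \<circ> U s)
     \<and> (\<forall>t s. g t = g s \<longrightarrow> U t = U s) \<and> (\<forall>f. continuous_on UNIV (\<lambda>t. U t f))"

definition G_invariant :: "('h::real_inner \<Rightarrow> 'h) \<Rightarrow> (real \<Rightarrow> real \<times> real) \<Rightarrow> (real \<Rightarrow> 'h \<Rightarrow> 'h) \<Rightarrow> 'h set \<Rightarrow> ('h \<Rightarrow> 'h) \<Rightarrow> bool" where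
  "G_invariant J g U D A \<longleftrightarrow> lin_op J D A \<and> densely_defined D \<and> closed_op D A \<and>
     (\<forall>t. U t ` D = D \<and> (\<forall>f\<in>D. U t (A (inv (U t) f)) = fst (g t) *\<^sub>R A f + snd (g t) *\<^sub>R f))"

definition contraction_semigroup :: "('h::real_inner \<Rightarrow> 'h) \<Rightarrow> (real \<Rightarrow> 'h \<Rightarrow> 'h) \<Rightarrow> bool" where
  "contraction_semigroup J V \<longleftrightarrow>
     (\<forall>s\<ge>0. (\<forall>x y. V s (x + y) = V s x + V s y) \<and> (\<forall>c x. V s (smC J c x) = smC J c (V s x))
             \<and> (\<forall>x. norm (V s x) \<le> norm x))
     \<and> V 0 = id \<and> (\<forall>s\<ge>0. \<forall>r\<ge>0. V (s + r) = V s \<circ> V r)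
     \<and> (\<forall>f. continuous_on {0..} (\<lambda>s. V s f))"

text \<open>V s = exp(i A s): the infinitesimal generator of V is i A with domain D.\<close>
definition generated_by :: "('h::real_inner \<Rightarrow> 'h) \<Rightarrow> (real \<Rightarrow> 'h \<Rightarrow> 'h) \<Rightarrow> 'h set \<Rightarrow> ('h \<Rightarrow> 'h) \<Rightarrow> bool" where
  "generated_by J V D A \<longleftrightarrow>
     D = {f. \<exists>y. ((\<lambda>s. (1 / s) *\<^sub>R (V s f - f)) \<longlongrightarrow> y) (at_right 0)} \<and>
     (\<forall>f\<in>D. ((\<lambda>s. (1 / s) *\<^sub>R (V s f - f)) \<longlongrightarrow> smC J \<i> (A f)) (at_right 0))"

definition weyl_relations :: "('h::real_inner \<Rightarrow> 'h) \<Rightarrow> (real \<Rightarrow> real \<times> real) \<Rightarrow> (real \<Rightarrow> 'h \<Rightarrow> 'h) \<Rightarrow> (real \<Rightarrow> 'h \<Rightarrow> 'h) \<Rightarrow> bool" where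
  "weyl_relations J g U V \<longleftrightarrow> (\<forall>t. \<forall>s\<ge>0. \<forall>x.
     U t (V s x) = smC J (exp (\<i> * complex_of_real (s * aff (g t) 0))) (V (deriv (aff (g t)) 0 * s) (U t x)))"

end

theory Submission
  imports Defs
begin

text \<open>Write \<open>g\<^sub>t x = a x + b\<close>. The Weyl relations say that \<open>V\<close> coincides with the
  conjugated semigroup \<open>W\<^sub>r = exp (- i r b / a) U\<^sub>t V\<^bsub>r/a\<^esub> U\<^sub>t\<^sup>-\<^sup>1\<close>. Differentiating at \<open>r = 0\<close>
  shows that \<open>W\<close> is generated by \<open>(U\<^sub>t A U\<^sub>t\<^sup>-\<^sup>1 - b)/a\<close>, so \<open>G\<close>-invariance of \<open>A\<close>
  says precisely that \<open>W\<close> and \<open>V\<close> have the same generator. The Weyl relations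
  therefore give invariance directly. Conversely, invariance gives the Weyl
  relations because a contraction semigroup is determined by its generator on a
  dense domain: for \<open>f\<close> in the domain, \<open>r \<mapsto> W\<^bsub>s-r\<^esub> V\<^sub>r f\<close> has derivative zero
  on \<open>(0, s)\<close>.\<close>

text \<open>A type of sort \<open>{real_inner, complete_space}\<close> is not of sort \<open>banach\<close>; this
  copy of it is, which gives access to the integral.\<close>

typedef 'a as_banach = "UNIV :: ('a::{real_inner,complete_space}) set" by auto
setup_lifting type_definition_as_banach

instantiation as_banach :: ("{real_inner,complete_space}") real_inner
begin
lift_definition zero_as_banach :: "'a as_banach" is 0 .
lift_definition plus_as_banach :: "'a as_banach \<Rightarrow> 'a as_banach \<Rightarrow> 'a as_banach" is "(+)" .
lift_definition minus_as_banach :: "'a as_banach \<Rightarrow> 'a as_banach \<Rightarrow> 'a as_banach" is "(-)" .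
lift_definition uminus_as_banach :: "'a as_banach \<Rightarrow> 'a as_banach" is uminus .
lift_definition scaleR_as_banach :: "real \<Rightarrow> 'a as_banach \<Rightarrow> 'a as_banach" is scaleR .
lift_definition norm_as_banach :: "'a as_banach \<Rightarrow> real" is norm .
lift_definition sgn_as_banach :: "'a as_banach \<Rightarrow> 'a as_banach" is sgn .
lift_definition dist_as_banach :: "'a as_banach \<Rightarrow> 'a as_banach \<Rightarrow> real" is dist .
lift_definition inner_as_banach :: "'a as_banach \<Rightarrow> 'a as_banach \<Rightarrow> real" is inner .
definition uniformity_as_banach :: "('a as_banach \<times> 'a as_banach) filter" where
  "uniformity_as_banach = (INF e\<in>{0<..}. principal {(x, y). dist x y < e})"
definition open_as_banach :: "'a as_banach set \<Rightarrow> bool" where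
  "open_as_banach U = (\<forall>x\<in>U. eventually (\<lambda>(x', y). x' = x \<longrightarrow> y \<in> U) uniformity)"
instance
proof
  show "(uniformity :: ('a as_banach \<times> 'a as_banach) filter) = (INF e\<in>{0<..}. principal {(x, y). dist x y < e})"
    by (simp add: uniformity_as_banach_def)
  show "open U = (\<forall>x\<in>U. eventually (\<lambda>(x', y). x' = x \<longrightarrow> y \<in> U) uniformity)" for U :: "'a as_banach set"
    by (simp add: open_as_banach_def)
qed (transfer; simp add: algebra_simps dist_norm sgn_div_norm norm_triangle_ineq dist_triangle2
      inner_add_left inner_commute norm_eq_sqrt_inner)+
end

instance as_banach :: ("{real_inner,complete_space}") complete_space
proof
  fix X :: "nat \<Rightarrow> 'a as_banach" assume "Cauchy X"
  then have "Cauchy (\<lambda>n. Rep_as_banach (X n))" unfolding Cauchy_def by transfer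
  then obtain L where L: "(\<lambda>n. Rep_as_banach (X n)) \<longlonglongrightarrow> L" by (metis Cauchy_convergent convergent_def)
  have "X \<longlonglongrightarrow> Abs_as_banach L"
    using L unfolding LIMSEQ_def dist_as_banach_def by (simp add: Abs_as_banach_inverse)
  then show "convergent X" by (auto simp: convergent_def)
qed

instance as_banach :: ("{real_inner,complete_space}") banach ..

lemma bounded_linear_Abs_as_banach: "bounded_linear Abs_as_banach"
  by (rule bounded_linear_intro[where K=1])
     (simp_all add: plus_as_banach_def scaleR_as_banach_def norm_as_banach_def Abs_as_banach_inverse)

lemma bounded_linear_Rep_as_banach: "bounded_linear Rep_as_banach"
  by (rule bounded_linear_intro[where K=1])
     (simp_all add: plus_as_banach_def scaleR_as_banach_def norm_as_banach_def Abs_as_banach_inverse)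

lemma continuous_on_has_antiderivative:
  fixes f :: "real \<Rightarrow> 'h::{real_inner,complete_space}"
  assumes "continuous_on {a..b} f"
  obtains F where "F a = 0" "\<And>x. x \<in> {a..b} \<Longrightarrow> (F has_vector_derivative f x) (at x within {a..b})"
proof -
  have cont: "continuous_on {a..b} (\<lambda>x. Abs_as_banach (f x))"
    by (rule continuous_on_compose2[OF linear_continuous_on[OF bounded_linear_Abs_as_banach] assms]) auto
  define F where "F u = Rep_as_banach (integral {a..u} (\<lambda>x. Abs_as_banach (f x)))" for u
  have "F a = 0" unfolding F_def by (simp add: zero_as_banach.rep_eq)
  moreover have "(F has_vector_derivative f x) (at x within {a..b})" if "x \<in> {a..b}" for x
    using bounded_linear.has_vector_derivative[OF bounded_linear_Rep_as_banach
        integral_has_vector_derivative[OF cont that]]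
    unfolding F_def by (simp add: Abs_as_banach_inverse)
  ultimately show ?thesis using that by blast
qed

lemma has_vector_derivative_iff_difference_quotient:
  fixes f :: "real \<Rightarrow> 'a::real_normed_vector"
  shows "(f has_vector_derivative f') (at x within S) \<longleftrightarrow>
    ((\<lambda>y. (1 / (y - x)) *\<^sub>R (f y - f x)) \<longlongrightarrow> f') (at x within S)"
proof -
  have "norm ((f y - f x) - (y - x) *\<^sub>R f') / norm (y - x) = norm ((1 / (y - x)) *\<^sub>R (f y - f x) - f')"
    if "y \<noteq> x" for y
  proof -
    have "norm ((1 / (y - x)) *\<^sub>R (f y - f x) - f') = norm ((1 / (y - x)) *\<^sub>R ((f y - f x) - (y - x) *\<^sub>R f'))"
      using that by (simp add: scaleR_diff_right)
    also have "\<dots> = norm ((f y - f x) - (y - x) *\<^sub>R f') / norm (y - x)"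
      by (simp add: divide_simps)
    finally show ?thesis by simp
  qed
  then have eq: "eventually (\<lambda>y. norm ((f y - f x) - (y - x) *\<^sub>R f') / norm (y - x)
     = norm ((1 / (y - x)) *\<^sub>R (f y - f x) - f')) (at x within S)"
    unfolding eventually_at_filter by (intro always_eventually) auto
  have "(f has_vector_derivative f') (at x within S) \<longleftrightarrow>
     ((\<lambda>y. norm ((f y - f x) - (y - x) *\<^sub>R f') / norm (y - x)) \<longlongrightarrow> 0) (at x within S)"
    unfolding has_vector_derivative_def has_derivative_iff_norm
    using bounded_linear_scaleR_left[of f'] by simp
  also have "\<dots> \<longleftrightarrow> ((\<lambda>y. norm ((1 / (y - x)) *\<^sub>R (f y - f x) - f')) \<longlongrightarrow> 0) (at x within S)"
    by (rule tendsto_cong[OF eq])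
  also have "\<dots> \<longleftrightarrow> ((\<lambda>y. (1 / (y - x)) *\<^sub>R (f y - f x)) \<longlongrightarrow> f') (at x within S)"
    by (simp add: tendsto_norm_zero_iff LIM_zero_iff)
  finally show ?thesis .
qed

lemma has_vector_derivative_at_iff_one_sided:
  fixes f :: "real \<Rightarrow> 'a::real_normed_vector"
  shows "(f has_vector_derivative f') (at x) \<longleftrightarrow>
    ((\<lambda>y. (1 / (y - x)) *\<^sub>R (f y - f x)) \<longlongrightarrow> f') (at_right x) \<and>
    ((\<lambda>y. (1 / (y - x)) *\<^sub>R (f y - f x)) \<longlongrightarrow> f') (at_left x)"
  unfolding has_vector_derivative_iff_difference_quotient filterlim_at_split by auto

lemma norm_diff_le_of_vector_derivative_bound:
  fixes \<phi> :: "real \<Rightarrow> 'h::real_inner"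
  assumes "a \<le> b" "continuous_on {a..b} \<phi>"
    "\<And>x. a < x \<Longrightarrow> x < b \<Longrightarrow> (\<phi> has_vector_derivative d x) (at x)"
    "\<And>x. a < x \<Longrightarrow> x < b \<Longrightarrow> norm (d x) \<le> B"
  shows "norm (\<phi> b - \<phi> a) \<le> B * (b - a)"
proof (cases "a = b")
  case False
  then have ab: "a < b" using assms(1) by simp
  obtain x where x: "x \<in> {a<..<b}" and le: "norm (\<phi> b - \<phi> a) \<le> norm ((b - a) *\<^sub>R d x)"
    using mvt_general[OF ab assms(2), of "\<lambda>x h. h *\<^sub>R d x"] assms(3) unfolding has_vector_derivative_def
    by blast
  have "norm ((b - a) *\<^sub>R d x) = (b - a) * norm (d x)" using ab by simp
  also have "\<dots> \<le> (b - a) * B" using assms(4)[of x] x ab by (intro mult_left_mono) auto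
  finally show ?thesis using le by (simp add: mult.commute)
qed simp

lemma eq_of_vector_derivative_zero:
  fixes \<phi> :: "real \<Rightarrow> 'h::real_inner"
  assumes "a \<le> b" "continuous_on {a..b} \<phi>"
    "\<And>x. a < x \<Longrightarrow> x < b \<Longrightarrow> (\<phi> has_vector_derivative 0) (at x)"
  shows "\<phi> b = \<phi> a"
  using norm_diff_le_of_vector_derivative_bound[OF assms(1,2), of "\<lambda>_. 0" 0] assms(3) by simp

lemma filterlim_at_right_shift_0: "filterlim (\<lambda>y. y - r) (at_right 0) (at_right (r::real))"
  by (simp add: filterlim_at_right_to_0 filterlim_ident)

lemma filterlim_at_left_reflect_0: "filterlim (\<lambda>y. r - y) (at_right 0) (at_left (r::real))"
  by (simp add: filterlim_at_left_to_right filterlim_at_right_to_0 filterlim_ident)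

section \<open>Contraction semigroups\<close>

text \<open>For \<open>V\<^sub>s = exp (i A s)\<close>, \<open>sg_gen V\<close> is the real-linear generator \<open>i A = J \<circ> A\<close>
  (see \<open>generated_byD\<close>).\<close>

definition contraction_sg :: "(real \<Rightarrow> 'h::real_normed_vector \<Rightarrow> 'h) \<Rightarrow> bool" where
  "contraction_sg V \<longleftrightarrow> (\<forall>s\<ge>0. bounded_linear (V s) \<and> (\<forall>x. norm (V s x) \<le> norm x)) \<and> V 0 = id
     \<and> (\<forall>s\<ge>0. \<forall>r\<ge>0. V (s + r) = V s \<circ> V r) \<and> (\<forall>f. continuous_on {0..} (\<lambda>s. V s f))"

definition diff_quot :: "(real \<Rightarrow> 'h::real_normed_vector \<Rightarrow> 'h) \<Rightarrow> 'h \<Rightarrow> real \<Rightarrow> 'h" where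
  "diff_quot V f s = (1 / s) *\<^sub>R (V s f - f)"

definition sg_dom :: "(real \<Rightarrow> 'h::real_normed_vector \<Rightarrow> 'h) \<Rightarrow> 'h set" where
  "sg_dom V = {f. \<exists>y. (diff_quot V f \<longlongrightarrow> y) (at_right 0)}"

definition sg_gen :: "(real \<Rightarrow> 'h::real_normed_vector \<Rightarrow> 'h) \<Rightarrow> 'h \<Rightarrow> 'h" where
  "sg_gen V f = Lim (at_right 0) (diff_quot V f)"

lemma sg_gen_tendsto: "f \<in> sg_dom V \<Longrightarrow> (diff_quot V f \<longlongrightarrow> sg_gen V f) (at_right 0)"
  unfolding sg_dom_def sg_gen_def using tendsto_Lim[of "at_right (0::real)"] by auto

lemma sg_genI: "(diff_quot V f \<longlongrightarrow> y) (at_right 0) \<Longrightarrow> f \<in> sg_dom V \<and> sg_gen V f = y"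
  unfolding sg_dom_def sg_gen_def using tendsto_Lim[of "at_right (0::real)"] by auto

lemma contraction_sgD:
  assumes "contraction_sg V"
  shows "s \<ge> 0 \<Longrightarrow> bounded_linear (V s)" "s \<ge> 0 \<Longrightarrow> norm (V s x) \<le> norm x" "V 0 = id"
    "s \<ge> 0 \<Longrightarrow> r \<ge> 0 \<Longrightarrow> V (s + r) x = V s (V r x)" "continuous_on {0..} (\<lambda>s. V s f)"
  using assms unfolding contraction_sg_def by auto

lemma tendsto_contraction_sg:
  assumes V: "contraction_sg V" and "(q \<longlongrightarrow> u) F" "(\<tau> \<longlongrightarrow> t0) F" "eventually (\<lambda>z. \<tau> z \<ge> 0) F" "t0 \<ge> 0"
  shows "((\<lambda>z. V (\<tau> z) (q z)) \<longlongrightarrow> V t0 u) F"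
proof -
  have orbit: "((\<lambda>z. V (\<tau> z) u) \<longlongrightarrow> V t0 u) F"
    by (rule continuous_on_tendsto_compose[OF contraction_sgD(5)[OF V] assms(3)]) (use assms in auto)
  have "((\<lambda>z. V (\<tau> z) (q z - u)) \<longlongrightarrow> 0) F"
  proof (rule Lim_null_comparison)
    show "eventually (\<lambda>z. norm (V (\<tau> z) (q z - u)) \<le> norm (q z - u)) F"
      using assms(4) by eventually_elim (use contraction_sgD(2)[OF V] in auto)
    show "((\<lambda>z. norm (q z - u)) \<longlongrightarrow> 0) F"
      using tendsto_norm_zero[OF LIM_zero[OF assms(2)]] .
  qed
  from tendsto_add[OF this orbit] have "((\<lambda>z. V (\<tau> z) (q z - u) + V (\<tau> z) u) \<longlongrightarrow> V t0 u) F" by simp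
  moreover have "eventually (\<lambda>z. V (\<tau> z) (q z - u) + V (\<tau> z) u = V (\<tau> z) (q z)) F"
    using assms(4) by eventually_elim (use contraction_sgD(1)[OF V] in \<open>simp add: linear_simps\<close>)
  ultimately show ?thesis by (rule Lim_transform_eventually)
qed

lemma sg_gen_eventually_eq:
  assumes eq: "\<And>r. r > 0 \<Longrightarrow> V r = W r" and f: "f \<in> sg_dom W"
  shows "f \<in> sg_dom V \<and> sg_gen V f = sg_gen W f"
proof (rule sg_genI)
  have "eventually (\<lambda>r. diff_quot W f r = diff_quot V f r) (at_right 0)"
    using eventually_at_right_less[of 0] by eventually_elim (simp add: diff_quot_def eq)
  from Lim_transform_eventually[OF sg_gen_tendsto[OF f] this]
  show "(diff_quot V f \<longlongrightarrow> sg_gen W f) (at_right 0)" .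
qed

lemma sg_gen_commute:
  assumes T: "bounded_linear T" and f: "f \<in> sg_dom V" and comm: "\<And>s. s > 0 \<Longrightarrow> V s (T f) = T (V s f)"
  shows "T f \<in> sg_dom V \<and> sg_gen V (T f) = T (sg_gen V f)"
proof (rule sg_genI)
  have "((\<lambda>s. T (diff_quot V f s)) \<longlongrightarrow> T (sg_gen V f)) (at_right 0)"
    by (rule bounded_linear.tendsto[OF T sg_gen_tendsto[OF f]])
  moreover have "eventually (\<lambda>s. T (diff_quot V f s) = diff_quot V (T f) s) (at_right 0)"
    using eventually_at_right_less[of 0]
    by eventually_elim (use T comm in \<open>simp add: diff_quot_def linear_simps\<close>)
  ultimately show "(diff_quot V (T f) \<longlongrightarrow> T (sg_gen V f)) (at_right 0)"
    by (rule Lim_transform_eventually)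
qed

lemma sg_gen_add:
  assumes V: "contraction_sg V" and "x \<in> sg_dom V" "y \<in> sg_dom V"
  shows "x + y \<in> sg_dom V \<and> sg_gen V (x + y) = sg_gen V x + sg_gen V y"
proof (rule sg_genI)
  have "((\<lambda>s. diff_quot V x s + diff_quot V y s) \<longlongrightarrow> sg_gen V x + sg_gen V y) (at_right 0)"
    by (intro tendsto_add sg_gen_tendsto assms(2,3))
  moreover have "eventually (\<lambda>s. diff_quot V x s + diff_quot V y s = diff_quot V (x + y) s) (at_right 0)"
    using eventually_at_right_less[of 0]
    by eventually_elim
       (use contraction_sgD(1)[OF V] in \<open>simp add: diff_quot_def linear_simps scaleR_add_right scaleR_diff_right\<close>)
  ultimately show "(diff_quot V (x + y) \<longlongrightarrow> sg_gen V x + sg_gen V y) (at_right 0)"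
    by (rule Lim_transform_eventually)
qed

lemma sg_dom_semigroup_invariant:
  assumes V: "contraction_sg V" and f: "f \<in> sg_dom V" and r: "r \<ge> 0"
  shows "V r f \<in> sg_dom V \<and> sg_gen V (V r f) = V r (sg_gen V f)"
proof (rule sg_gen_commute[OF contraction_sgD(1)[OF V r] f])
  show "V s (V r f) = V r (V s f)" if "s > 0" for s
    using contraction_sgD(4)[OF V, of s r] contraction_sgD(4)[OF V, of r s] that r
    by (simp add: add.commute)
qed

lemma orbit_has_vector_derivative_at_0:
  assumes V: "contraction_sg V" and f: "f \<in> sg_dom V"
  shows "((\<lambda>s. V s f) has_vector_derivative sg_gen V f) (at 0 within {0..})"
  unfolding has_vector_derivative_iff_difference_quotient at_within_Ici_at_right
  using sg_gen_tendsto[OF f] contraction_sgD(3)[OF V] by (simp add: diff_quot_def[abs_def])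

lemma has_vector_derivative_orbit:
  assumes V: "contraction_sg V" and f: "f \<in> sg_dom V" and r: "r > 0"
  shows "((\<lambda>s. V s f) has_vector_derivative V r (sg_gen V f)) (at r)"
  unfolding has_vector_derivative_at_iff_one_sided
proof
  have "((\<lambda>y. V r (diff_quot V f (y - r))) \<longlongrightarrow> V r (sg_gen V f)) (at_right r)"
    by (rule bounded_linear.tendsto[OF contraction_sgD(1)[OF V]])
       (use r filterlim_compose[OF sg_gen_tendsto[OF f] filterlim_at_right_shift_0] in auto)
  moreover have "eventually (\<lambda>y. V r (diff_quot V f (y - r)) = (1 / (y - r)) *\<^sub>R (V y f - V r f)) (at_right r)"
    using eventually_at_right_less[of r]
  proof eventually_elim
    case (elim y)
    have "V y f = V r (V (y - r) f)" using contraction_sgD(4)[OF V, of r "y - r"] elim r by simp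
    then show ?case
      using contraction_sgD(1)[OF V, of r] r by (simp add: diff_quot_def linear_simps)
  qed
  ultimately show "((\<lambda>y. (1 / (y - r)) *\<^sub>R (V y f - V r f)) \<longlongrightarrow> V r (sg_gen V f)) (at_right r)"
    by (rule Lim_transform_eventually)
next
  have "((\<lambda>y. V y (diff_quot V f (r - y))) \<longlongrightarrow> V r (sg_gen V f)) (at_left r)"
  proof (rule tendsto_contraction_sg[OF V])
    show "((\<lambda>y. diff_quot V f (r - y)) \<longlongrightarrow> sg_gen V f) (at_left r)"
      using filterlim_compose[OF sg_gen_tendsto[OF f] filterlim_at_left_reflect_0] .
    show "eventually (\<lambda>y. y \<ge> 0) (at_left r)"
      using eventually_at_left_real[of 0 r] r by (auto elim: eventually_mono)
  qed (use r in \<open>auto intro: tendsto_ident_at\<close>)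
  moreover have "eventually (\<lambda>y. V y (diff_quot V f (r - y)) = (1 / (y - r)) *\<^sub>R (V y f - V r f)) (at_left r)"
    using eventually_at_left_real[of 0 r] r
  proof (auto elim!: eventually_mono)
    fix y assume y: "0 < y" "y < r"
    have "V r f = V y (V (r - y) f)" using contraction_sgD(4)[OF V, of y "r - y"] y by simp
    moreover have "1 / (y - r) = - (1 / (r - y))" using y by (simp add: field_simps)
    ultimately show "V y (diff_quot V f (r - y)) = (1 / (y - r)) *\<^sub>R (V y f - V r f)"
      using contraction_sgD(1)[OF V, of y] y by (simp add: diff_quot_def linear_simps scaleR_diff_right)
  qed
  ultimately show "((\<lambda>y. (1 / (y - r)) *\<^sub>R (V y f - V r f)) \<longlongrightarrow> V r (sg_gen V f)) (at_left r)"
    by (rule Lim_transform_eventually)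
qed

lemma tendsto_diff_quot_moving_base:
  assumes W: "contraction_sg W" and x: "x \<in> sg_dom W"
    and p: "((\<lambda>y. (1 / (r - y)) *\<^sub>R (p y - x)) \<longlongrightarrow> v) (at_left r)"
  shows "((\<lambda>y. diff_quot W (p y) (r - y)) \<longlongrightarrow> sg_gen W x) (at_left r)"
proof -
  have ev: "eventually (\<lambda>y. y < r) (at_left r)"
    using eventually_at_left_real[of "r - 1" r] by (auto elim: eventually_mono)
  have "((\<lambda>y. W (r - y) ((1 / (r - y)) *\<^sub>R (p y - x))) \<longlongrightarrow> W 0 v) (at_left r)"
    by (rule tendsto_contraction_sg[OF W p]) (use ev in \<open>auto intro!: tendsto_eq_intros elim: eventually_mono\<close>)
  from tendsto_add[OF tendsto_diff[OF this p] filterlim_compose[OF sg_gen_tendsto[OF x] filterlim_at_left_reflect_0]]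
  have "((\<lambda>y. W (r - y) ((1 / (r - y)) *\<^sub>R (p y - x)) - (1 / (r - y)) *\<^sub>R (p y - x) + diff_quot W x (r - y))
      \<longlongrightarrow> sg_gen W x) (at_left r)"
    by (simp add: contraction_sgD(3)[OF W])
  moreover have "eventually (\<lambda>y. W (r - y) ((1 / (r - y)) *\<^sub>R (p y - x)) - (1 / (r - y)) *\<^sub>R (p y - x)
      + diff_quot W x (r - y) = diff_quot W (p y) (r - y)) (at_left r)"
    using ev by eventually_elim
      (use contraction_sgD(1)[OF W] in \<open>simp add: diff_quot_def linear_simps scaleR_diff_right algebra_simps\<close>)
  ultimately show ?thesis by (rule Lim_transform_eventually)
qed

context
  fixes V W :: "real \<Rightarrow> 'h::real_inner \<Rightarrow> 'h"
  assumes V: "contraction_sg V" and W: "contraction_sg W"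
    and dom_subset: "sg_dom V \<subseteq> sg_dom W"
    and gen_eq: "\<And>f. f \<in> sg_dom V \<Longrightarrow> sg_gen W f = sg_gen V f"
begin

lemma interpolation_right_derivative:
  assumes f: "f \<in> sg_dom V" and r: "0 < r" "r < s"
  shows "((\<lambda>y. (1 / (y - r)) *\<^sub>R (W (s - y) (V y f) - W (s - r) (V r f))) \<longlongrightarrow> 0) (at_right r)"
proof -
  define x where "x = V r f"
  have x: "x \<in> sg_dom V" "x \<in> sg_dom W" "sg_gen W x = sg_gen V x"
    using sg_dom_semigroup_invariant[OF V f, of r] r dom_subset gen_eq unfolding x_def by auto
  have "((\<lambda>y. W (s - y) (diff_quot V x (y - r) - diff_quot W x (y - r)))
      \<longlongrightarrow> W (s - r) (sg_gen V x - sg_gen W x)) (at_right r)"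
  proof (rule tendsto_contraction_sg[OF W])
    show "((\<lambda>y. diff_quot V x (y - r) - diff_quot W x (y - r)) \<longlongrightarrow> sg_gen V x - sg_gen W x) (at_right r)"
      by (intro tendsto_diff filterlim_compose[OF sg_gen_tendsto filterlim_at_right_shift_0] x)
    show "\<forall>\<^sub>F y in at_right r. 0 \<le> s - y"
      using eventually_at_right_real[of r s] r by (auto elim: eventually_mono)
  qed (use r in \<open>auto intro!: tendsto_intros\<close>)
  moreover have "W (s - r) 0 = 0" using contraction_sgD(1)[OF W, of "s - r"] r by (simp add: linear_simps)
  ultimately have lim: "((\<lambda>y. W (s - y) (diff_quot V x (y - r) - diff_quot W x (y - r))) \<longlongrightarrow> 0) (at_right r)"
    using x by simp
  have "eventually (\<lambda>y. W (s - y) (diff_quot V x (y - r) - diff_quot W x (y - r))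
      = (1 / (y - r)) *\<^sub>R (W (s - y) (V y f) - W (s - r) (V r f))) (at_right r)"
    using eventually_at_right_real[of r s] r
  proof (auto elim!: eventually_mono)
    fix y assume y: "r < y" "y < s"
    have "V y f = V (y - r) x" using contraction_sgD(4)[OF V, of "y - r" r] y r unfolding x_def by simp
    moreover have "W (s - r) z = W (s - y) (W (y - r) z)" for z
      using contraction_sgD(4)[OF W, of "s - y" "y - r"] y by simp
    ultimately show "W (s - y) (diff_quot V x (y - r) - diff_quot W x (y - r))
        = (1 / (y - r)) *\<^sub>R (W (s - y) (V y f) - W (s - r) (V r f))"
      using contraction_sgD(1)[OF W, of "s - y"] y
      by (simp add: diff_quot_def x_def[symmetric] linear_simps scaleR_diff_right)
  qed
  from Lim_transform_eventually[OF lim this] show ?thesis .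
qed

lemma interpolation_left_derivative:
  assumes f: "f \<in> sg_dom V" and r: "0 < r" "r < s"
  shows "((\<lambda>y. (1 / (y - r)) *\<^sub>R (W (s - y) (V y f) - W (s - r) (V r f))) \<longlongrightarrow> 0) (at_left r)"
proof -
  define x where "x = V r f"
  define u where "u = V r (sg_gen V f)"
  have x: "x \<in> sg_dom W" "sg_gen W x = u"
    using sg_dom_semigroup_invariant[OF V f, of r] r dom_subset gen_eq unfolding x_def u_def by auto
  have ev: "eventually (\<lambda>y. y \<in> {0<..<r}) (at_left r)" using eventually_at_left_real[of 0 r] r by simp
  have orbit: "((\<lambda>y. (1 / (y - r)) *\<^sub>R (V y f - x)) \<longlongrightarrow> u) (at_left r)"
    using has_vector_derivative_orbit[OF V f r(1)] unfolding has_vector_derivative_at_iff_one_sided u_def x_def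
    by simp
  have "eventually (\<lambda>y. - ((1 / (y - r)) *\<^sub>R (V y f - x)) = (1 / (r - y)) *\<^sub>R (V y f - x)) (at_left r)"
    using ev
  proof eventually_elim
    case (elim y)
    then have "1 / (y - r) = - (1 / (r - y))" by (simp add: field_simps)
    then show ?case by simp
  qed
  from Lim_transform_eventually[OF tendsto_minus[OF orbit] this]
  have base: "((\<lambda>y. (1 / (r - y)) *\<^sub>R (V y f - x)) \<longlongrightarrow> - u) (at_left r)" .
  have "eventually (\<lambda>y. - ((1 / (r - y)) *\<^sub>R (V y f - x)) = diff_quot V (V y f) (r - y)) (at_left r)"
    using ev
  proof eventually_elim
    case (elim y)
    then have "x = V (r - y) (V y f)" using contraction_sgD(4)[OF V, of "r - y" y] unfolding x_def by simp
    then show ?case by (simp add: diff_quot_def scaleR_diff_right)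
  qed
  from Lim_transform_eventually[OF tendsto_minus[OF base] this]
  have QV: "((\<lambda>y. diff_quot V (V y f) (r - y)) \<longlongrightarrow> u) (at_left r)" by simp
  have QW: "((\<lambda>y. diff_quot W (V y f) (r - y)) \<longlongrightarrow> u) (at_left r)"
    using tendsto_diff_quot_moving_base[OF W x(1) base] unfolding x(2) .
  have "((\<lambda>y. W (s - r) (diff_quot V (V y f) (r - y) - diff_quot W (V y f) (r - y))) \<longlongrightarrow> W (s - r) (u - u)) (at_left r)"
    by (intro bounded_linear.tendsto[OF contraction_sgD(1)[OF W]] tendsto_diff QV QW) (use r in auto)
  then have lim: "((\<lambda>y. W (s - r) (diff_quot V (V y f) (r - y) - diff_quot W (V y f) (r - y))) \<longlongrightarrow> 0) (at_left r)"
    using contraction_sgD(1)[OF W, of "s - r"] r by (simp add: linear_simps)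
  have "eventually (\<lambda>y. W (s - r) (diff_quot V (V y f) (r - y) - diff_quot W (V y f) (r - y))
      = (1 / (y - r)) *\<^sub>R (W (s - y) (V y f) - W (s - r) (V r f))) (at_left r)"
    using ev
  proof eventually_elim
    case (elim y)
    then have y: "0 < y" "y < r" by auto
    have "V r f = V (r - y) (V y f)" using contraction_sgD(4)[OF V, of "r - y" y] y by simp
    moreover have "W (s - y) z = W (s - r) (W (r - y) z)" for z
      using contraction_sgD(4)[OF W, of "s - r" "r - y"] y r by simp
    moreover have "1 / (y - r) = - (1 / (r - y))" using y by (simp add: field_simps)
    ultimately show ?case
      using contraction_sgD(1)[OF W, of "s - r"] y r
      by (simp add: diff_quot_def linear_simps scaleR_diff_right)
  qed
  from Lim_transform_eventually[OF lim this] show ?thesis .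
qed

lemma contraction_sg_eq_on_sg_dom:
  assumes f: "f \<in> sg_dom V" and s: "s \<ge> 0"
  shows "W s f = V s f"
proof -
  define \<phi> where "\<phi> r = W (s - r) (V r f)" for r
  have "continuous_on {0..s} \<phi>"
    unfolding continuous_on_def
  proof
    fix r assume r: "r \<in> {0..s}"
    show "(\<phi> \<longlongrightarrow> \<phi> r) (at r within {0..s})" unfolding \<phi>_def
    proof (rule tendsto_contraction_sg[OF W])
      show "((\<lambda>y. V y f) \<longlongrightarrow> V r f) (at r within {0..s})"
        using contraction_sgD(5)[OF V, of f] r unfolding continuous_on_def
        by (meson atLeastAtMost_iff atLeast_iff subsetI tendsto_within_subset)
      show "\<forall>\<^sub>F y in at r within {0..s}. 0 \<le> s - y"
        by (simp add: eventually_at_filter)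
    qed (use r in \<open>auto intro: tendsto_diff tendsto_ident_at\<close>)
  qed
  moreover have "(\<phi> has_vector_derivative 0) (at r)" if "0 < r" "r < s" for r
    unfolding has_vector_derivative_at_iff_one_sided \<phi>_def
    using interpolation_right_derivative[OF f that] interpolation_left_derivative[OF f that] by simp
  ultimately have "\<phi> s = \<phi> 0" by (rule eq_of_vector_derivative_zero[OF s])
  then show ?thesis unfolding \<phi>_def using contraction_sgD(3)[OF V] contraction_sgD(3)[OF W] by simp
qed

lemma contraction_sg_eqI:
  assumes dense: "closure (sg_dom V) = UNIV" and s: "s \<ge> 0"
  shows "W s x = V s x"
proof -
  have "closed {x. W s x = V s x}"
    by (intro closed_Collect_eq linear_continuous_on contraction_sgD(1) V W s)
  moreover have "sg_dom V \<subseteq> {x. W s x = V s x}" using contraction_sg_eq_on_sg_dom s by auto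
  ultimately have "closure (sg_dom V) \<subseteq> {x. W s x = V s x}" by (rule closure_minimal[rotated])
  then show ?thesis using dense by auto
qed

end

context
  fixes V :: "real \<Rightarrow> 'h::real_inner \<Rightarrow> 'h" and G :: "real \<Rightarrow> 'h" and f :: 'h
  assumes V: "contraction_sg V" and G_0: "G 0 = 0"
    and G_deriv: "\<And>x. x \<in> {0..2} \<Longrightarrow> (G has_vector_derivative V x f) (at x within {0..2})"
begin

lemma antiderivative_orbit_deriv_at:
  assumes "0 < x" "x < 2" shows "(G has_vector_derivative V x f) (at x)"
  using G_deriv[of x] assms at_within_Icc_at[of 0 x 2] by auto

lemma antiderivative_orbit_continuous: "continuous_on {0..2} G"
  using G_deriv has_vector_derivative_continuous continuous_on_eq_continuous_within by blast

lemma antiderivative_orbit_shift: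
  assumes s: "0 \<le> s" "s \<le> 1" and h: "0 \<le> h" "h \<le> 1"
  shows "V s (G h) = G (s + h) - G s"
proof -
  define \<Phi> where "\<Phi> u = V s (G u) - G (s + u) + G s" for u
  have bl: "bounded_linear (V s)" using contraction_sgD(1)[OF V] s by auto
  have "continuous_on {0..1} \<Phi>" unfolding \<Phi>_def
    by (intro continuous_on_add continuous_on_diff continuous_on_const
        continuous_on_compose2[OF linear_continuous_on[OF bl] continuous_on_subset[OF antiderivative_orbit_continuous]]
        continuous_on_compose2[OF antiderivative_orbit_continuous])
       (use s in \<open>auto intro!: continuous_intros\<close>)
  moreover have "(\<Phi> has_vector_derivative 0) (at u)" if u: "0 < u" "u < 1" for u
  proof -
    have "((\<lambda>u. s + u) has_vector_derivative 1) (at u)"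
      by (auto intro!: derivative_eq_intros)
    from vector_diff_chain_at[OF this antiderivative_orbit_deriv_at[of "s + u"]]
    have "((\<lambda>u. G (s + u)) has_vector_derivative V (s + u) f) (at u)"
      using u s by (simp add: o_def)
    then have "(\<Phi> has_vector_derivative V s (V u f) - V (s + u) f + 0) (at u)"
      unfolding \<Phi>_def using u
      by (intro derivative_intros bounded_linear.has_vector_derivative[OF bl antiderivative_orbit_deriv_at]) auto
    then show ?thesis using contraction_sgD(4)[OF V, of s u] s u by simp
  qed
  ultimately have "\<Phi> h = \<Phi> 0"
    by (intro eq_of_vector_derivative_zero[OF h(1)]) (use h in \<open>auto intro: continuous_on_subset\<close>)
  then show ?thesis unfolding \<Phi>_def using G_0 bl
    by (simp add: linear_simps) (simp add: algebra_simps eq_neg_iff_add_eq_0)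
qed

lemma antiderivative_orbit_quotient_tendsto: "((\<lambda>y. (1 / y) *\<^sub>R G y) \<longlongrightarrow> f) (at_right 0)"
  using G_deriv[of 0] contraction_sgD(3)[OF V] G_0
  unfolding has_vector_derivative_iff_difference_quotient by (simp add: at_within_Icc_at_right)

lemma antiderivative_orbit_in_sg_dom:
  assumes h: "0 < h" "h \<le> 1" shows "G h \<in> sg_dom V"
proof -
  have "((\<lambda>y. (1 / (y - h)) *\<^sub>R (G y - G h)) \<longlongrightarrow> V h f) (at_right h)"
    using antiderivative_orbit_deriv_at[of h] h
    unfolding has_vector_derivative_at_iff_one_sided by simp
  then have "((\<lambda>s. (1 / (s + h - h)) *\<^sub>R (G (s + h) - G h)) \<longlongrightarrow> V h f) (at_right 0)"
    by (subst (asm) filterlim_at_right_to_0) simp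
  from tendsto_diff[OF this antiderivative_orbit_quotient_tendsto]
  have "((\<lambda>s. (1 / (s + h - h)) *\<^sub>R (G (s + h) - G h) - (1 / s) *\<^sub>R G s) \<longlongrightarrow> V h f - f) (at_right 0)" .
  moreover have "eventually (\<lambda>s. (1 / (s + h - h)) *\<^sub>R (G (s + h) - G h) - (1 / s) *\<^sub>R G s
      = diff_quot V (G h) s) (at_right 0)"
    using eventually_at_right_real[OF zero_less_one]
    by eventually_elim
       (use antiderivative_orbit_shift h in \<open>simp add: diff_quot_def scaleR_diff_right add.commute\<close>)
  ultimately show ?thesis using sg_genI Lim_transform_eventually by blast
qed

end

text \<open>\<open>f\<close> is the limit of the means \<open>(1/h) \<integral>\<^sub>0\<^sup>h V r f dr\<close>, which lie in the domain.\<close>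

lemma sg_dom_dense:
  fixes V :: "real \<Rightarrow> 'h::{real_inner,complete_space} \<Rightarrow> 'h"
  assumes V: "contraction_sg V"
  shows "closure (sg_dom V) = UNIV"
proof -
  have "f \<in> closure (sg_dom V)" for f
  proof -
    have "continuous_on {0..2} (\<lambda>r. V r f)"
      by (rule continuous_on_subset[OF contraction_sgD(5)[OF V]]) auto
    then obtain G where G_0: "G 0 = 0"
      and G_deriv: "\<And>x. x \<in> {0..2} \<Longrightarrow> (G has_vector_derivative V x f) (at x within {0..2})"
      using continuous_on_has_antiderivative by blast
    have "eventually (\<lambda>y. (1 / y) *\<^sub>R G y \<in> sg_dom V) (at_right 0)"
      using eventually_at_right_real[OF zero_less_one]
    proof eventually_elim
      case (elim y)
      then show ?case
        using sg_gen_commute[OF bounded_linear_scaleR_right antiderivative_orbit_in_sg_dom[OF V G_0 G_deriv]]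
          contraction_sgD(1)[OF V]
        by (auto simp: linear_simps)
    qed
    then show ?thesis
      by (intro Lim_in_closed_set[OF closed_closure _ _ antiderivative_orbit_quotient_tendsto[OF V G_0 G_deriv]])
         (auto elim: eventually_mono intro: closure_subset[THEN subsetD])
  qed
  then show ?thesis by auto
qed

lemma norm_orbit_deviation_le:
  fixes V :: "real \<Rightarrow> 'h::real_inner \<Rightarrow> 'h"
  assumes V: "contraction_sg V" and x: "x \<in> sg_dom V" and s: "s \<ge> 0"
    and w: "\<And>r. 0 < r \<Longrightarrow> r < s \<Longrightarrow> norm (V r w - w) \<le> \<epsilon>"
  shows "norm (V s x - s *\<^sub>R w - x) \<le> (norm (sg_gen V x - w) + \<epsilon>) * s"
proof -
  define \<phi> where "\<phi> r = V r x - r *\<^sub>R w" for r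
  have "continuous_on {0..s} \<phi>" unfolding \<phi>_def
    by (intro continuous_on_diff continuous_on_subset[OF contraction_sgD(5)[OF V]] continuous_intros) auto
  then have "norm (\<phi> s - \<phi> 0) \<le> (norm (sg_gen V x - w) + \<epsilon>) * (s - 0)"
  proof (rule norm_diff_le_of_vector_derivative_bound[OF s])
    fix r assume r: "0 < r" "r < s"
    show "(\<phi> has_vector_derivative V r (sg_gen V x) - w) (at r)"
      unfolding \<phi>_def
      by (intro derivative_intros has_vector_derivative_orbit[OF V x] r) (auto intro!: derivative_eq_intros)
    have "V r (sg_gen V x) - w = V r (sg_gen V x - w) + (V r w - w)"
      using contraction_sgD(1)[OF V, of r] r by (simp add: linear_simps)
    also have "norm \<dots> \<le> norm (sg_gen V x - w) + \<epsilon>"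
      using contraction_sgD(2)[OF V, of r] w[OF r] r
      by (intro order.trans[OF norm_triangle_ineq] add_mono) auto
    finally show "norm (V r (sg_gen V x) - w) \<le> norm (sg_gen V x - w) + \<epsilon>" .
  qed
  then show ?thesis unfolding \<phi>_def using contraction_sgD(3)[OF V] by (simp add: algebra_simps)
qed

lemma sg_gen_closed:
  fixes V :: "real \<Rightarrow> 'h::real_inner \<Rightarrow> 'h"
  assumes V: "contraction_sg V" and xD: "\<And>n. x n \<in> sg_dom V" and x: "x \<longlonglongrightarrow> x0"
    and gen: "(\<lambda>n. sg_gen V (x n)) \<longlonglongrightarrow> w"
  shows "x0 \<in> sg_dom V \<and> sg_gen V x0 = w"
proof (rule sg_genI)
  show "(diff_quot V x0 \<longlongrightarrow> w) (at_right 0)"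
    unfolding tendsto_iff
  proof (intro allI impI)
    fix e :: real assume e: "e > 0"
    obtain \<delta> where \<delta>: "\<delta> > 0" and w_cont: "\<And>r. r \<in> {0..} \<Longrightarrow> dist r 0 < \<delta> \<Longrightarrow> dist (V r w) (V 0 w) < e / 2"
      using contraction_sgD(5)[OF V, of w] e unfolding continuous_on_iff by (meson atLeast_iff half_gt_zero order_refl)
    have close: "norm (diff_quot V x0 s - w) \<le> e / 2" if s: "0 < s" "s < \<delta>" for s
    proof -
      have "norm (V r w - w) \<le> e / 2" if "0 < r" "r < s" for r
        using w_cont[of r] that s contraction_sgD(3)[OF V] by (simp add: dist_norm)
      then have "norm (V s (x n) - s *\<^sub>R w - x n) \<le> (norm (sg_gen V (x n) - w) + e / 2) * s" for n
        using norm_orbit_deviation_le[OF V xD, of s w "e / 2"] s by simp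
      moreover have "(\<lambda>n. norm (V s (x n) - s *\<^sub>R w - x n)) \<longlonglongrightarrow> norm (V s x0 - s *\<^sub>R w - x0)"
        by (intro tendsto_intros bounded_linear.tendsto[OF contraction_sgD(1)[OF V]] x) (use s in auto)
      moreover have "(\<lambda>n. (norm (sg_gen V (x n) - w) + e / 2) * s) \<longlonglongrightarrow> (norm (w - w) + e / 2) * s"
        by (intro tendsto_intros gen)
      ultimately have "norm (V s x0 - s *\<^sub>R w - x0) \<le> e / 2 * s"
        using LIMSEQ_le by fastforce
      moreover have "diff_quot V x0 s - w = (1 / s) *\<^sub>R (V s x0 - s *\<^sub>R w - x0)"
        unfolding diff_quot_def using s by (simp add: algebra_simps scaleR_diff_right)
      ultimately show ?thesis using s by (simp add: divide_simps mult.commute)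
    qed
    show "eventually (\<lambda>s. dist (diff_quot V x0 s) w < e) (at_right 0)"
      using eventually_at_right_real[OF \<delta>] by eventually_elim (use close e in \<open>force simp: dist_norm\<close>)
  qed
qed

lemma cplx_structureD:
  assumes "cplx_structure J"
  shows "bounded_linear J" "J (J x) = - x" "norm (J x) = norm x" "inner (J x) (J y) = inner x y"
proof -
  have l: "linear J" and ip: "\<And>x y. inner (J x) (J y) = inner x y"
    using assms unfolding cplx_structure_def by auto
  have n: "norm (J x) = norm x" for x by (simp add: norm_eq_sqrt_inner ip)
  show "bounded_linear J"
    by (rule bounded_linear_intro[where K=1]) (use l n in \<open>auto simp: linear_add linear_scale\<close>)
  show "J (J x) = - x" "norm (J x) = norm x" "inner (J x) (J y) = inner x y"
    using assms n ip unfolding cplx_structure_def by auto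
qed

lemma smC_simps [simp]:
  "smC J \<i> y = J y" "smC J 1 y = y" "smC J (complex_of_real c) y = c *\<^sub>R y"
  by (simp_all add: smC_def)

lemma smC_smC:
  assumes "cplx_structure J" shows "smC J z (smC J w x) = smC J (z * w) x"
  using cplx_structureD[OF assms]
  by (simp add: smC_def linear_simps algebra_simps)

lemma J_smC:
  assumes "cplx_structure J" shows "J (smC J c x) = smC J c (J x)"
  using cplx_structureD[OF assms]
  by (simp add: smC_def linear_simps algebra_simps)

lemma bounded_linear_smC:
  assumes "cplx_structure J" shows "bounded_linear (smC J c)"
  unfolding smC_def
  by (intro bounded_linear_add bounded_linear_scaleR_right bounded_linear_ident
      bounded_linear_compose[OF bounded_linear_scaleR_right] cplx_structureD(1)[OF assms])

lemma smC_exp_minus_ii: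
  "smC J (exp (- (\<i> * complex_of_real \<theta>))) y = cos \<theta> *\<^sub>R y - sin \<theta> *\<^sub>R J y"
  by (simp add: smC_def Re_exp Im_exp)

lemma norm_smC_exp_minus_ii:
  assumes J: "cplx_structure J"
  shows "norm (smC J (exp (- (\<i> * complex_of_real \<theta>))) y) = norm y"
proof -
  have "inner y (J y) = inner (J y) (J (J y))" using cplx_structureD(4)[OF J] by simp
  then have orth: "inner y (J y) = 0" using cplx_structureD(2)[OF J] by (simp add: inner_commute)
  have "inner (cos \<theta> *\<^sub>R y - sin \<theta> *\<^sub>R J y) (cos \<theta> *\<^sub>R y - sin \<theta> *\<^sub>R J y)
      = (cos \<theta>)\<^sup>2 * inner y y + (sin \<theta>)\<^sup>2 * inner y y"
    using cplx_structureD(4)[OF J, of y y]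
    by (simp add: orth inner_commute[of "J y" y] power2_eq_square algebra_simps)
  also have "\<dots> = inner y y" by (simp add: distrib_right[symmetric])
  finally show ?thesis unfolding smC_exp_minus_ii norm_eq_sqrt_inner by simp
qed

lemma unitaryD:
  assumes "unitary J U"
  shows "bounded_linear U" "norm (U x) = norm x" "U (J x) = J (U x)" "U (smC J c x) = smC J c (U x)"
proof -
  have ip: "inner (U x) (U y) = inner x y" for x y
    using assms unfolding unitary_def cinner_def by (metis complex.sel(1))
  have n: "norm (U x) = norm x" for x by (simp add: norm_eq_sqrt_inner ip)
  have add: "U (x + y) = U x + U y" for x y using assms unfolding unitary_def by blast
  have sm: "U (smC J c x) = smC J c (U x)" for c x using assms unfolding unitary_def by blast
  show "bounded_linear U"
    by (rule bounded_linear_intro[where K=1]) (use add n sm[of "complex_of_real _"] in simp_all)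
  show "norm (U x) = norm x" "U (J x) = J (U x)" "U (smC J c x) = smC J c (U x)"
    using n sm[of \<i>] sm by auto
qed

lemma sc_unitary_repD:
  assumes "sc_unitary_rep J g U"
  shows "unitary J (U t)" "U (- t) (U t x) = x" "U t (U (- t) x) = x" "inv (U t) = U (- t)"
proof -
  have comp: "U (t + s) = U t \<circ> U s" for t s using assms unfolding sc_unitary_rep_def by blast
  show un: "unitary J (U t)" for t using assms unfolding sc_unitary_rep_def by blast
  have U_0: "U 0 y = y" for y
  proof -
    obtain z where "y = U 0 z" using un[of 0] unfolding unitary_def by (metis surjD)
    then show ?thesis using fun_cong[OF comp[of 0 0], of z] by simp
  qed
  show i1: "U (- t) (U t x) = x" for x using comp[of "- t" t] U_0 by (simp add: fun_eq_iff)
  show i2: "U t (U (- t) x) = x" for x using comp[of t "- t"] U_0 by (simp add: fun_eq_iff)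
  show "inv (U t) = U (- t)" by (rule inv_equality) (use i1 i2 in auto)
qed

lemma contraction_sg_of_contraction_semigroup:
  assumes "contraction_semigroup J V" shows "contraction_sg V"
proof -
  have "bounded_linear (V s)" if "s \<ge> 0" for s
  proof (rule bounded_linear_intro[where K=1])
    show "V s (r *\<^sub>R x) = r *\<^sub>R V s x" for r x
      using assms that unfolding contraction_semigroup_def
      by (metis smC_simps(3))
  qed (use assms that in \<open>auto simp: contraction_semigroup_def\<close>)
  then show ?thesis using assms unfolding contraction_semigroup_def contraction_sg_def by auto
qed

lemma generated_byD:
  assumes "generated_by J V D A"
  shows "D = sg_dom V" "f \<in> D \<Longrightarrow> sg_gen V f = J (A f)"
proof -
  have dq: "diff_quot V f = (\<lambda>s. (1 / s) *\<^sub>R (V s f - f))" for f by (simp add: diff_quot_def fun_eq_iff)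
  show "D = sg_dom V" using assms unfolding generated_by_def sg_dom_def dq by simp
  show "f \<in> D \<Longrightarrow> sg_gen V f = J (A f)"
    using assms sg_genI[of V f] unfolding generated_by_def dq by simp
qed

lemma generated_by_lin_op:
  assumes J: "cplx_structure J" and V: "contraction_semigroup J V" and gen: "generated_by J V D A"
  shows "lin_op J D A"
proof -
  note D = generated_byD(1)[OF gen] and A = generated_byD(2)[OF gen]
  have A_eq: "A f = - J (sg_gen V f)" if "f \<in> D" for f using A[OF that] cplx_structureD(2)[OF J] by simp
  have V': "contraction_sg V" by (rule contraction_sg_of_contraction_semigroup[OF V])
  have smC_dom: "smC J c x \<in> sg_dom V \<and> sg_gen V (smC J c x) = smC J c (sg_gen V x)" if "x \<in> sg_dom V" for x c
    by (rule sg_gen_commute[OF bounded_linear_smC[OF J] that])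
       (use V in \<open>auto simp: contraction_semigroup_def\<close>)
  have "(diff_quot V 0 \<longlongrightarrow> 0) (at_right 0)"
    by (rule Lim_transform_eventually[OF tendsto_const], use eventually_at_right_less[of 0] in eventually_elim)
       (use contraction_sgD(1)[OF V'] in \<open>simp add: diff_quot_def linear_simps\<close>)
  then have zero: "0 \<in> sg_dom V" using sg_genI by blast
  show ?thesis
    unfolding lin_op_def
  proof (intro conjI ballI allI)
    fix x y c assume x: "x \<in> D" and y: "y \<in> D"
    show "x + y \<in> D" "A (x + y) = A x + A y"
      using sg_gen_add[OF V'] A_eq x y D cplx_structureD(1)[OF J] by (auto simp: linear_simps)
  next
    fix x c assume x: "x \<in> D"
    show "smC J c x \<in> D" using smC_dom x D by auto
    show "A (smC J c x) = smC J c (A x)"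
      using smC_dom[of x c] A_eq x D J_smC[OF J] bounded_linear_smC[OF J, of c] by (auto simp: linear_simps)
  qed (use zero D in auto)
qed

lemma generated_by_densely_defined:
  fixes V :: "real \<Rightarrow> 'h::{real_inner,complete_space} \<Rightarrow> 'h"
  assumes "contraction_semigroup J V" and "generated_by J V D A"
  shows "densely_defined D"
  unfolding densely_defined_def generated_byD(1)[OF assms(2)]
  by (rule sg_dom_dense[OF contraction_sg_of_contraction_semigroup[OF assms(1)]])

lemma generated_by_closed_op:
  assumes J: "cplx_structure J" and V: "contraction_semigroup J V" and gen: "generated_by J V D A"
  shows "closed_op D A"
  unfolding closed_op_def closed_sequential_limits
proof (intro allI impI, elim conjE)
  note D = generated_byD(1)[OF gen] and A = generated_byD(2)[OF gen]
  fix p l assume graph: "\<forall>n. p n \<in> {(x, A x) |x. x \<in> D}" and lim: "p \<longlonglongrightarrow> l"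
  have p: "fst (p n) \<in> D \<and> snd (p n) = A (fst (p n))" for n using graph[rule_format, of n] by force
  have "(\<lambda>n. J (snd (p n))) \<longlonglongrightarrow> J (snd l)"
    by (intro bounded_linear.tendsto[OF cplx_structureD(1)[OF J]] tendsto_snd lim)
  then have "(\<lambda>n. sg_gen V (fst (p n))) \<longlonglongrightarrow> J (snd l)" using p A D by simp
  then have "fst l \<in> sg_dom V \<and> sg_gen V (fst l) = J (snd l)"
    using sg_gen_closed[OF contraction_sg_of_contraction_semigroup[OF V] _ tendsto_fst[OF lim]] p D by blast
  then have "fst l \<in> D" "A (fst l) = snd l"
    using A[of "fst l"] D cplx_structureD(2)[OF J] by (auto dest: arg_cong[where f = J])
  then show "l \<in> {(x, A x) |x. x \<in> D}" by (intro CollectI exI[of _ "fst l"]) auto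
qed

section \<open>The conjugated semigroup and the Weyl relations\<close>

text \<open>With \<open>T = U\<^sub>t\<close>, \<open>T' = U\<^sub>t\<^sup>-\<^sup>1\<close> and \<open>g\<^sub>t x = a x + b\<close> this is the semigroup
  \<open>W\<^sub>r = exp (- i r b / a) U\<^sub>t V\<^bsub>r/a\<^esub> U\<^sub>t\<^sup>-\<^sup>1\<close> that the Weyl relations identify with \<open>V\<close>.\<close>

definition weyl_conjugate ::
  "('h::real_inner \<Rightarrow> 'h) \<Rightarrow> ('h \<Rightarrow> 'h) \<Rightarrow> ('h \<Rightarrow> 'h) \<Rightarrow> real \<Rightarrow> real \<Rightarrow> (real \<Rightarrow> 'h \<Rightarrow> 'h) \<Rightarrow> real \<Rightarrow> 'h \<Rightarrow> 'h"
  where "weyl_conjugate J T T' a b V r y = smC J (exp (- (\<i> * complex_of_real (r / a * b)))) (T (V (r / a) (T' y)))"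

lemma contraction_sg_weyl_conjugate:
  assumes J: "cplx_structure J" and V: "contraction_semigroup J V"
    and T: "unitary J T" and T': "unitary J T'" and "\<And>x. T (T' x) = x" "\<And>x. T' (T x) = x" and a: "a > 0"
  shows "contraction_sg (weyl_conjugate J T T' a b V)"
proof -
  define E where "E r = exp (- (\<i> * complex_of_real (r / a * b)))" for r
  define W where "W = weyl_conjugate J T T' a b V"
  have W_def': "W r y = smC J (E r) (T (V (r / a) (T' y)))" for r y
    by (simp add: W_def E_def weyl_conjugate_def)
  have V': "contraction_sg V" by (rule contraction_sg_of_contraction_semigroup[OF V])
  have bl: "bounded_linear (W r)" if "r \<ge> 0" for r
    unfolding W_def'[abs_def]
    by (intro bounded_linear_compose[OF bounded_linear_smC[OF J]] bounded_linear_compose[OF unitaryD(1)[OF T]]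
        bounded_linear_compose[OF contraction_sgD(1)[OF V'] unitaryD(1)[OF T']]) (use that a in auto)
  have "norm (W r y) \<le> norm y" if "r \<ge> 0" for r y
    unfolding W_def' E_def norm_smC_exp_minus_ii[OF J] unitaryD(2)[OF T]
    using contraction_sgD(2)[OF V', of "r / a" "T' y"] that a by (simp add: unitaryD(2)[OF T'])
  moreover have "W 0 = id" using contraction_sgD(3)[OF V'] assms(5) by (auto simp: W_def' E_def)
  moreover have "W (s + r) = W s \<circ> W r" if "s \<ge> 0" "r \<ge> 0" for s r
  proof
    fix y
    have "E s * E r = E (s + r)"
      unfolding E_def exp_add[symmetric] by (simp add: algebra_simps add_divide_distrib)
    moreover have "V ((s + r) / a) (T' y) = V (s / a) (V (r / a) (T' y))"
      using contraction_sgD(4)[OF V', of "s / a" "r / a"] that a by (simp add: add_divide_distrib)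
    moreover have "V (s / a) (smC J c z) = smC J c (V (s / a) z)" for c z
      using V that a unfolding contraction_semigroup_def by auto
    ultimately show "W (s + r) y = (W s \<circ> W r) y"
      unfolding W_def' using assms(6) by (simp add: unitaryD(4)[OF T] unitaryD(4)[OF T'] smC_smC[OF J])
  qed
  moreover have "continuous_on {0..} (\<lambda>r. W r y)" for y
  proof -
    have orbit: "continuous_on {0..} (\<lambda>r. T (V (r / a) (T' y)))"
      by (rule continuous_on_compose2[OF linear_continuous_on[OF unitaryD(1)[OF T]]
            continuous_on_compose2[OF contraction_sgD(5)[OF V']]])
         (use a in \<open>auto intro: continuous_on_divide\<close>)
    show ?thesis unfolding W_def' E_def smC_exp_minus_ii
      by (intro continuous_intros orbit continuous_on_compose2[OF linear_continuous_on[OF cplx_structureD(1)[OF J]] orbit])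
         (use a in auto)
  qed
  ultimately show ?thesis unfolding contraction_sg_def W_def[symmetric] using bl by blast
qed

lemma sg_gen_weyl_conjugate:
  assumes J: "cplx_structure J" and V: "contraction_sg V" and T: "bounded_linear T"
    and TJ: "\<And>z. T (J z) = J (T z)" and T'T: "T' (T x) = x" and a: "a > 0" and x: "x \<in> sg_dom V"
  shows "T x \<in> sg_dom (weyl_conjugate J T T' a b V) \<and>
    sg_gen (weyl_conjugate J T T' a b V) (T x) = (1 / a) *\<^sub>R T (sg_gen V x) - (b / a) *\<^sub>R J (T x)"
proof (rule sg_genI)
  define y where "y r = T (V (r / a) x)" for r
  have "((\<lambda>r. r / a) has_vector_derivative 1 / a) (at 0 within {0..})"
    using a by (auto intro!: derivative_eq_intros simp: has_real_derivative_iff_has_vector_derivative[symmetric])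
  moreover have "((\<lambda>s. V s x) has_vector_derivative sg_gen V x) (at 0 within (\<lambda>r. r / a) ` {0..})"
    by (rule has_vector_derivative_within_subset[OF orbit_has_vector_derivative_at_0[OF V x]]) (use a in auto)
  ultimately have "((\<lambda>s. V s x) \<circ> (\<lambda>r. r / a) has_vector_derivative (1 / a) *\<^sub>R sg_gen V x) (at 0 within {0..})"
    by (intro vector_diff_chain_within) simp_all
  from bounded_linear.has_vector_derivative[OF T this]
  have y': "(y has_vector_derivative (1 / a) *\<^sub>R T (sg_gen V x)) (at 0 within {0..})"
    unfolding y_def by (simp add: o_def linear_simps T)
  have y0: "y 0 = T x" unfolding y_def using contraction_sgD(3)[OF V] by simp
  have "((\<lambda>r. cos (r / a * b) *\<^sub>R y r - sin (r / a * b) *\<^sub>R J (y r)) has_vector_derivative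
      (1 / a) *\<^sub>R T (sg_gen V x) - (b / a) *\<^sub>R J (T x)) (at 0 within {0..})"
    using a by (auto intro!: derivative_eq_intros y' bounded_linear.has_vector_derivative[OF cplx_structureD(1)[OF J]]
        simp: y0 cplx_structureD(1)[OF J] linear_simps)
  then show "(diff_quot (weyl_conjugate J T T' a b V) (T x) \<longlongrightarrow>
      (1 / a) *\<^sub>R T (sg_gen V x) - (b / a) *\<^sub>R J (T x)) (at_right 0)"
    unfolding has_vector_derivative_iff_difference_quotient at_within_Ici_at_right
      diff_quot_def[abs_def] weyl_conjugate_def smC_exp_minus_ii T'T y_def
    by (simp add: contraction_sgD(3)[OF V])
qed

lemma smC_exp_ii_cancel:
  assumes J: "cplx_structure J"
  shows "smC J (exp (\<i> * complex_of_real \<theta>)) (smC J (exp (- (\<i> * complex_of_real \<theta>))) y) = y"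
    and "smC J (exp (- (\<i> * complex_of_real \<theta>))) (smC J (exp (\<i> * complex_of_real \<theta>)) y) = y"
  by (simp_all add: smC_smC[OF J] exp_add[symmetric])

lemma aff_0: "aff p 0 = snd p"
  by (simp add: aff_def)

lemma deriv_aff_0: "deriv (aff p) 0 = fst p"
proof -
  have "((\<lambda>x. fst p * x + snd p) has_field_derivative fst p) (at 0)"
    by (auto intro!: derivative_eq_intros)
  then show ?thesis unfolding aff_def[abs_def] by (rule DERIV_imp_deriv)
qed

lemma weyl_relations_iff_eq_weyl_conjugate:
  assumes J: "cplx_structure J" and rep: "sc_unitary_rep J g U" and g: "one_param_affine g"
  shows "weyl_relations J g U V \<longleftrightarrow>
    (\<forall>t. \<forall>r\<ge>0. V r = weyl_conjugate J (U t) (U (- t)) (fst (g t)) (snd (g t)) V r)"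
proof -
  have a: "fst (g t) > 0" for t using g unfolding one_param_affine_def by auto
  show ?thesis unfolding weyl_relations_def deriv_aff_0 aff_0
  proof (intro iffI allI impI ext)
    fix t r :: real and y assume weyl: "\<forall>t. \<forall>s\<ge>0. \<forall>x. U t (V s x) =
      smC J (exp (\<i> * complex_of_real (s * snd (g t)))) (V (fst (g t) * s) (U t x))" and r: "0 \<le> r"
    have "U t (V (r / fst (g t)) (U (- t) y)) = smC J (exp (\<i> * complex_of_real (r / fst (g t) * snd (g t)))) (V r y)"
      using weyl[rule_format, of "r / fst (g t)" t "U (- t) y"] r a[of t] sc_unitary_repD(3)[OF rep] by simp
    then show "V r y = weyl_conjugate J (U t) (U (- t)) (fst (g t)) (snd (g t)) V r y"
      unfolding weyl_conjugate_def by (simp only: smC_exp_ii_cancel(2)[OF J])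
  next
    fix t s :: real and x assume conj: "\<forall>t. \<forall>r\<ge>0. V r = weyl_conjugate J (U t) (U (- t)) (fst (g t)) (snd (g t)) V r"
      and s: "0 \<le> s"
    have "V (fst (g t) * s) (U t x) = smC J (exp (- (\<i> * complex_of_real (s * snd (g t))))) (U t (V s x))"
      using conj[rule_format, of "fst (g t) * s" t] s a[of t] sc_unitary_repD(2)[OF rep]
      by (simp add: weyl_conjugate_def)
    then show "U t (V s x) = smC J (exp (\<i> * complex_of_real (s * snd (g t)))) (V (fst (g t) * s) (U t x))"
      by (simp only: smC_exp_ii_cancel(1)[OF J])
  qed
qed

lemma J_affine_identity_iff:
  assumes J: "cplx_structure J" and a: "a \<noteq> 0"
  shows "J P = (1 / a) *\<^sub>R J Q - (b / a) *\<^sub>R J R \<longleftrightarrow> Q = a *\<^sub>R P + b *\<^sub>R R"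
proof -
  have "J P = (1 / a) *\<^sub>R J Q - (b / a) *\<^sub>R J R \<longleftrightarrow> J P = J ((1 / a) *\<^sub>R Q - (b / a) *\<^sub>R R)"
    using cplx_structureD(1)[OF J] by (simp add: linear_simps)
  also have "\<dots> \<longleftrightarrow> P = (1 / a) *\<^sub>R Q - (b / a) *\<^sub>R R"
    using cplx_structureD(2)[OF J] by (metis neg_equal_iff_equal)
  also have "\<dots> \<longleftrightarrow> a *\<^sub>R P = Q - b *\<^sub>R R"
  proof -
    have "a *\<^sub>R ((1 / a) *\<^sub>R Q - (b / a) *\<^sub>R R) = Q - b *\<^sub>R R" using a by (simp add: scaleR_diff_right)
    then show ?thesis using a by (metis scaleR_cancel_left)
  qed
  also have "\<dots> \<longleftrightarrow> Q = a *\<^sub>R P + b *\<^sub>R R" by (auto simp: algebra_simps)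
  finally show ?thesis .
qed

lemma weyl_relations_of_G_invariant:
  assumes J: "cplx_structure J" and rep: "sc_unitary_rep J g U" and g: "one_param_affine g"
    and inv: "G_invariant J g U D A" and V: "contraction_semigroup J V" and gen: "generated_by J V D A"
  shows "weyl_relations J g U V"
  unfolding weyl_relations_iff_eq_weyl_conjugate[OF J rep g]
proof (intro allI impI)
  fix t r :: real assume r: "r \<ge> 0"
  define W where "W = weyl_conjugate J (U t) (U (- t)) (fst (g t)) (snd (g t)) V"
  note D = generated_byD(1)[OF gen] and A = generated_byD(2)[OF gen]
  have V': "contraction_sg V" by (rule contraction_sg_of_contraction_semigroup[OF V])
  have a: "fst (g t) > 0" using g unfolding one_param_affine_def by auto
  have U: "unitary J (U t)" "unitary J (U (- t))" using sc_unitary_repD(1)[OF rep] by auto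
  have W: "contraction_sg W" unfolding W_def
    by (rule contraction_sg_weyl_conjugate[OF J V U]) (use sc_unitary_repD(2,3)[OF rep] a in auto)
  have same_gen: "f \<in> sg_dom W \<and> sg_gen W f = sg_gen V f" if f: "f \<in> sg_dom V" for f
  proof -
    define x where "x = U (- t) f"
    have x: "x \<in> D" using inv f D unfolding G_invariant_def x_def by blast
    have f_eq: "U t x = f" unfolding x_def by (rule sc_unitary_repD(3)[OF rep])
    have "U t (A x) = fst (g t) *\<^sub>R A f + snd (g t) *\<^sub>R f"
      using inv f D sc_unitary_repD(4)[OF rep] unfolding G_invariant_def x_def by auto
    then have "J (A f) = (1 / fst (g t)) *\<^sub>R J (U t (A x)) - (snd (g t) / fst (g t)) *\<^sub>R J f"
      using J_affine_identity_iff[OF J] a by simp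
    moreover note sg_gen_weyl_conjugate[where T = "U t" and T' = "U (- t)" and x = x
        and a = "fst (g t)" and b = "snd (g t)", OF J V' unitaryD(1,3)[OF U(1)] sc_unitary_repD(2)[OF rep, of t x] a]
    ultimately show ?thesis
      using x f D A[OF x] A[of f] unfolding W_def[symmetric] f_eq by (simp add: unitaryD(3)[OF U(1)])
  qed
  have dense: "closure (sg_dom V) = UNIV"
    using inv D unfolding G_invariant_def densely_defined_def by simp
  have "W r y = V r y" for y
    by (rule contraction_sg_eqI[OF V' W _ _ dense r]) (use same_gen in blast)+
  then show "V r = W r" by (simp add: fun_eq_iff)
qed

lemma G_invariant_of_weyl_relations:
  fixes J :: "'h::{real_inner, complete_space} \<Rightarrow> 'h"
  assumes J: "cplx_structure J" and rep: "sc_unitary_rep J g U" and g: "one_param_affine g"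
    and V: "contraction_semigroup J V" and gen: "generated_by J V D A" and weyl: "weyl_relations J g U V"
  shows "G_invariant J g U D A"
proof -
  note D = generated_byD(1)[OF gen] and A = generated_byD(2)[OF gen]
  have V': "contraction_sg V" by (rule contraction_sg_of_contraction_semigroup[OF V])
  have covariant: "U t x \<in> D \<and>
      J (A (U t x)) = (1 / fst (g t)) *\<^sub>R J (U t (A x)) - (snd (g t) / fst (g t)) *\<^sub>R J (U t x)"
    if x: "x \<in> D" for t x
  proof -
    have a: "fst (g t) > 0" using g unfolding one_param_affine_def by auto
    have U: "unitary J (U t)" using sc_unitary_repD(1)[OF rep] by auto
    have x_dom: "x \<in> sg_dom V" using x D by simp
    have eq: "V r = weyl_conjugate J (U t) (U (- t)) (fst (g t)) (snd (g t)) V r" if "r > 0" for r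
      using weyl that unfolding weyl_relations_iff_eq_weyl_conjugate[OF J rep g] by simp
    note conj = sg_gen_weyl_conjugate[where T = "U t" and T' = "U (- t)" and x = x
        and a = "fst (g t)" and b = "snd (g t)", OF J V' unitaryD(1,3)[OF U] sc_unitary_repD(2)[OF rep, of t x] a x_dom]
    have "U t x \<in> sg_dom V \<and>
        sg_gen V (U t x) = sg_gen (weyl_conjugate J (U t) (U (- t)) (fst (g t)) (snd (g t)) V) (U t x)"
      by (rule sg_gen_eventually_eq[OF eq conj[THEN conjunct1]])
    then show ?thesis using conj A[OF x] A[of "U t x"] D by (simp add: unitaryD(3)[OF U])
  qed
  have "U t ` D = D \<and> (\<forall>f\<in>D. U t (A (inv (U t) f)) = fst (g t) *\<^sub>R A f + snd (g t) *\<^sub>R f)" for t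
  proof (intro conjI ballI)
    have a: "fst (g t) > 0" using g unfolding one_param_affine_def by auto
    fix f assume f: "f \<in> D"
    then have x: "U (- t) f \<in> D" and f_eq: "U t (U (- t) f) = f"
      using covariant[of f "- t"] sc_unitary_repD(3)[OF rep] by auto
    then show "U t (A (inv (U t) f)) = fst (g t) *\<^sub>R A f + snd (g t) *\<^sub>R f"
      using covariant[OF x, of t] J_affine_identity_iff[OF J] a
      unfolding sc_unitary_repD(4)[OF rep] by simp
  next
    show "U t ` D = D"
    proof
      show "U t ` D \<subseteq> D" using covariant by blast
      show "D \<subseteq> U t ` D"
        using covariant[of _ "- t"] sc_unitary_repD(3)[OF rep, of t] by (metis image_eqI subsetI)
    qed
  qed
  then show ?thesis unfolding G_invariant_def
    using generated_by_lin_op[OF J V gen] generated_by_densely_defined[OF V gen]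
      generated_by_closed_op[OF J V gen] by blast
qed

theorem theorem2p6:
  fixes J :: "'h::{real_inner, complete_space} \<Rightarrow> 'h"
    and g :: "real \<Rightarrow> real \<times> real"
    and U :: "real \<Rightarrow> 'h \<Rightarrow> 'h"
  assumes "cplx_structure J"
    and "separable_space TYPE('h)"
    and "one_param_affine g"
    and "sc_unitary_rep J g U"
  shows "(\<forall>D A V. max_dissipative J D A \<and> G_invariant J g U D A \<and>
            contraction_semigroup J V \<and> generated_by J V D A \<longrightarrow> weyl_relations J g U V)
       \<and> (\<forall>D A V. contraction_semigroup J V \<and> generated_by J V D A \<and> weyl_relations J g U V
            \<longrightarrow> G_invariant J g U D A)"
  using weyl_relations_of_G_invariant[OF assms(1,4,3)] G_invariant_of_weyl_relations[OF assms(1,4,3)]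
  by blast

end
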